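(* Let $R=\mathcal{C}'/[(1+\delta_a)^2(1+r/\log M)]$ with $r>r_1$, where $$r_0=\frac{1}{2(1+\delta_a)^2},\qquad r_1=\frac{r_0}{2}+\frac{\sqrt{\log M}}{\sqrt{\pi}\,(1+\delta_a)}.$$ Let $x_r$ be defined by $1-x_r=\frac{1}{snr}\cdot\frac{r}{\log M}$ (equivalently, $x_r$ is the value of $x$ with $z_x=0$). Then for all $0\le x\le x_r$ (with $x\in[0,1]$), $$g_{low}(x)-x\ \ge\ gap:=\frac{1}{snr}\cdot\frac{r-r_1}{\log M}.$$
   Context: Fix an integer $M\ge2$, $snr>0$, $\nu=snr/(1+snr)$, constants $a\ge0$, $\mathcal{C}'>0$, and $\delta_a=a/\sqrt{2\log M}$ (natural logarithm). $\Phi,\phi$ denote the standard normal distribution function and density. For $x\in[0,1]$, $u>0$: $\mu(x,u)=\big(\sqrt{u/(1-x\nu)}-1\big)\sqrt{2\log M}-a$, $u_x=1-x\nu$, $z_x=\mu(x,(1-\nu)\mathcal{C}'/R)$, and $$g_{low}(x)=\Phi(z_x)+\frac1\nu\int_{z_x}^\infty\Big[1-\frac{R}{\mathcal{C}'}u_x\Big(1+\frac{z+a}{\sqrt{2\log M}}\Big)^2\Big]\phi(z)\,dz .$$ (This $g_{low}$ is a lower bound for $g(x)=\frac1\nu\int_{1-\nu}^1\Phi(\mu(x,u\,\mathcal{C}'/R))\,du$.) *)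

theory Defs
  imports "HOL-Probability.Probability"
begin

definition Phi :: "real \<Rightarrow> real" where
  "Phi z = (LBINT t:{..z}. std_normal_density t)"

definition nu :: "real \<Rightarrow> real" where
  "nu snr = snr / (1 + snr)"

definition delta_a :: "nat \<Rightarrow> real \<Rightarrow> real" where
  "delta_a M a = a / sqrt (2 * ln (real M))"

definition mu :: "nat \<Rightarrow> real \<Rightarrow> real \<Rightarrow> real \<Rightarrow> real \<Rightarrow> real" where
  "mu M snr a x u = (sqrt (u / (1 - x * nu snr)) - 1) * sqrt (2 * ln (real M)) - a"

definition u_x :: "real \<Rightarrow> real \<Rightarrow> real" where
  "u_x snr x = 1 - x * nu snr"

definition z_x :: "nat \<Rightarrow> real \<Rightarrow> real \<Rightarrow> real \<Rightarrow> real \<Rightarrow> real \<Rightarrow> real" where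
  "z_x M snr a C' R x = mu M snr a x ((1 - nu snr) * C' / R)"

definition g_low :: "nat \<Rightarrow> real \<Rightarrow> real \<Rightarrow> real \<Rightarrow> real \<Rightarrow> real \<Rightarrow> real" where
  "g_low M snr a C' R x =
     Phi (z_x M snr a C' R x)
     + (1 / nu snr) *
       (LBINT z:{z_x M snr a C' R x..}.
          (1 - (R / C') * u_x snr x * (1 + (z + a) / sqrt (2 * ln (real M)))\<^sup>2)
          * std_normal_density z)"

definition r0 :: "nat \<Rightarrow> real \<Rightarrow> real" where
  "r0 M a = 1 / (2 * (1 + delta_a M a)\<^sup>2)"

definition r1 :: "nat \<Rightarrow> real \<Rightarrow> real" where
  "r1 M a = r0 M a / 2 + sqrt (ln (real M)) / (sqrt pi * (1 + delta_a M a))"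

definition rate_R :: "nat \<Rightarrow> real \<Rightarrow> real \<Rightarrow> real \<Rightarrow> real" where
  "rate_R M a C' r = C' / ((1 + delta_a M a)\<^sup>2 * (1 + r / ln (real M)))"

definition x_r :: "nat \<Rightarrow> real \<Rightarrow> real \<Rightarrow> real" where
  "x_r M snr r = 1 - (1 / snr) * (r / ln (real M))"

end

theory Submission
  imports Defs
begin

(* Write L = ln M, c = sqrt(2L) + a = sqrt(2L)(1 + delta_a), w = 1 + r/L, u = u_x(x) = 1 - x nu
   and k = u/w.  For the rate R = rate_R M a C' r the integrand of g_low becomes 1 - k (1 + t/c)^2,
   and z_x = c (q - 1) with q = sqrt((1 - nu)/k).  Hence
        g_low(x) = Phi(z) + (1/nu) (P[N >= z] - k E[(1 + N/c)^2; N >= z]).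
   The hypothesis x <= x_r says exactly k >= 1 - nu, i.e. q <= 1.  The analytic core is the bound
        q^2 Phi(z) + E[(1 + N/c)^2; N >= z] <= E[(1 + max N 0 / c)^2] = 1 + sqrt(2/pi)/c + 1/(2c^2),
   obtained from a pointwise majorant, and the right-hand side is exactly 1 + r1/L; this identity
   is what the constant r1 is designed for.  Combining with Phi(z) + P[N >= z] >= 1 gives
   nu (g_low(x) - x) >= k (w - 1 - r1/L) >= (1 - nu)(r - r1)/L, and (1 - nu)/nu = 1/snr. *)

definition normal_tail :: "real \<Rightarrow> real" where
  "normal_tail z = (LBINT t:{z..}. std_normal_density t)"

definition square_tail :: "real \<Rightarrow> real \<Rightarrow> real" where
  "square_tail c z = (LBINT t:{z..}. (1 + t / c)\<^sup>2 * std_normal_density t)"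

lemma integrable_affine_square_normal:
  fixes c :: real
  shows "integrable lborel (\<lambda>t. (1 + t / c)\<^sup>2 * std_normal_density t)"
proof -
  have "(\<lambda>t. (1 + t / c)\<^sup>2 * std_normal_density t) =
     (\<lambda>t. std_normal_density t * t^0 + (2/c) * (std_normal_density t * t^1)
          + (1/c^2) * (std_normal_density t * t^2))"
    by (cases "c = 0") (auto simp: fun_eq_iff power2_eq_square field_simps)
  then show ?thesis
    by (simp only:) (intro Bochner_Integration.integrable_add
        Bochner_Integration.integrable_mult_right integrable_std_normal_moment)
qed

(* The two closed half-lines cover the line, so the lower and upper tails add up to at least 1. *)
lemma Phi_plus_normal_tail_ge_one: "Phi z + normal_tail z \<ge> 1"
proof -
  have left: "integrable lborel (\<lambda>t. indicator {..z} t *\<^sub>R std_normal_density t)"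
   and right: "integrable lborel (\<lambda>t. indicator {z..} t *\<^sub>R std_normal_density t)"
    by (intro integrable_mult_indicator; simp)+
  have "1 = (\<integral>t. std_normal_density t \<partial>lborel)" by simp
  also have "\<dots> \<le> (\<integral>t. indicator {..z} t *\<^sub>R std_normal_density t
                        + indicator {z..} t *\<^sub>R std_normal_density t \<partial>lborel)"
    using left right by (intro integral_mono) (auto split: split_indicator)
  also have "\<dots> = Phi z + normal_tail z"
    using left right by (simp add: Phi_def normal_tail_def set_lebesgue_integral_def)
  finally show ?thesis .
qed

lemma tail_integral_split:
  fixes z k c :: real
  shows "(LBINT t:{z..}. (1 - k * (1 + t / c)\<^sup>2) * std_normal_density t)
           = normal_tail z - k * square_tail c z"
proof -
  have "integrable lborel (\<lambda>t. indicator {z..} t *\<^sub>R std_normal_density t)"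
    and "integrable lborel (\<lambda>t. indicator {z..} t *\<^sub>R ((1 + t / c)\<^sup>2 * std_normal_density t))"
    by (intro integrable_mult_indicator integrable_affine_square_normal; simp)+
  moreover have "(\<lambda>t. indicator {z..} t *\<^sub>R ((1 - k * (1 + t / c)\<^sup>2) * std_normal_density t))
      = (\<lambda>t. indicator {z..} t *\<^sub>R std_normal_density t
             - k * (indicator {z..} t *\<^sub>R ((1 + t / c)\<^sup>2 * std_normal_density t)))"
    by (auto simp: fun_eq_iff algebra_simps)
  ultimately show ?thesis
    by (simp add: normal_tail_def square_tail_def set_lebesgue_integral_def)
qed

(* E[N |N|] = 0 by symmetry; together with E[N^2] = 1 it gives E[(max N 0)^2] = 1/2. *)
lemma std_normal_moment_t_abs_t:
  "has_bochner_integral lborel (\<lambda>t. std_normal_density t * (t * \<bar>t\<bar>)) 0"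
proof (rule has_bochner_integral_odd_function[OF has_bochner_integral_integrable])
  have "integrable lborel (\<lambda>t. std_normal_density t * (t * \<bar>t\<bar>))"
    using integrable_std_normal_moment[of 2]
    by (rule Bochner_Integration.integrable_bound) (auto simp: abs_mult power2_eq_square)
  then show "integrable lborel (\<lambda>t. indicator {0..} t *\<^sub>R (std_normal_density t * (t * \<bar>t\<bar>)))"
    by (intro integrable_mult_indicator) auto
qed (simp add: std_normal_density_def)

(* E[(1 + max N 0 / c)^2] = 1 + 2 E[N^+]/c + E[(N^+)^2]/c^2, using max t 0 = (|t| + t)/2
   and the absolute and even moments of the standard normal law. *)
lemma std_normal_positive_part_square:
  fixes c :: real
  shows "has_bochner_integral lborel (\<lambda>t. (1 + max t 0 / c)\<^sup>2 * std_normal_density t)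
           (1 + sqrt (2 / pi) / c + 1 / (2 * c\<^sup>2))"
proof -
  have expand: "(1 + max t 0 / c)\<^sup>2 * std_normal_density t =
      std_normal_density t * t ^ (2 * 0)
      + (1/c) * (std_normal_density t * \<bar>t\<bar> ^ (2 * 0 + 1))
      + (1/c) * (std_normal_density t * t ^ (2 * 0 + 1))
      + (1/(2*c\<^sup>2)) * (std_normal_density t * t ^ (2 * 1))
      + (1/(2*c\<^sup>2)) * (std_normal_density t * (t * \<bar>t\<bar>))" for t
    by (cases "t \<ge> 0"; cases "c = 0") (auto simp: field_simps power2_eq_square max_def)
  have "has_bochner_integral lborel
      (\<lambda>t. std_normal_density t * t ^ (2 * 0)
      + (1/c) * (std_normal_density t * \<bar>t\<bar> ^ (2 * 0 + 1))
      + (1/c) * (std_normal_density t * t ^ (2 * 0 + 1))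
      + (1/(2*c\<^sup>2)) * (std_normal_density t * t ^ (2 * 1))
      + (1/(2*c\<^sup>2)) * (std_normal_density t * (t * \<bar>t\<bar>)))
      (fact (2 * 0) / (2^0 * fact 0) + (1/c) * (sqrt (2/pi) * 2^0 * fact 0) + (1/c) * 0
       + (1/(2*c\<^sup>2)) * (fact (2*1) / (2^1 * fact 1)) + (1/(2*c\<^sup>2)) * 0)"
    by (intro has_bochner_integral_add has_bochner_integral_mult_right std_normal_moment_t_abs_t
        std_normal_moment_abs_odd std_normal_moment_odd std_normal_moment_even)
  then show ?thesis
    by (simp only: expand[symmetric]) simp
qed

lemma affine_square_le_positive_part_square:
  fixes c m t :: real
  assumes "c > 0" "0 \<le> m" and "c * (m - 1) \<le> t"
  shows "(1 + t / c)\<^sup>2 \<le> (1 + max t 0 / c)\<^sup>2"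
proof (cases "t \<le> 0")
  case True
  have "0 \<le> c * m" using assms(1,2) by simp
  then have "0 \<le> c + t" using assms(3) by (simp add: algebra_simps)
  then have "0 \<le> 1 + t / c" using assms(1) by (simp add: field_simps)
  moreover have "1 + t / c \<le> 1" using True assms(1) by (simp add: divide_nonpos_pos)
  ultimately show ?thesis using True by (simp add: power_le_one)
qed simp

(* The analytic core: for z = c (m - 1) with 0 < m <= 1, the function equal to m^2 below z and
   to (1 + t/c)^2 above z is a.e. dominated by (1 + max t 0 / c)^2, whose Gaussian integral
   was computed above. *)
lemma square_tail_bound:
  fixes c m z :: real
  assumes c: "c > 0" and m: "0 < m" "m \<le> 1" and z: "z = c * (m - 1)"
  shows "m\<^sup>2 * Phi z + square_tail c z \<le> 1 + sqrt (2 / pi) / c + 1 / (2 * c\<^sup>2)"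
proof -
  define majorant where "majorant = (\<lambda>t. (1 + max t 0 / c)\<^sup>2 * std_normal_density t)"
  define truncated where "truncated = (\<lambda>t. m\<^sup>2 * (indicator {..z} t *\<^sub>R std_normal_density t)
      + indicator {z..} t *\<^sub>R ((1 + t / c)\<^sup>2 * std_normal_density t))"
  have left: "integrable lborel (\<lambda>t. indicator {..z} t *\<^sub>R std_normal_density t)"
    by (intro integrable_mult_indicator) auto
  have right: "integrable lborel (\<lambda>t. indicator {z..} t *\<^sub>R ((1 + t / c)\<^sup>2 * std_normal_density t))"
    by (intro integrable_mult_indicator integrable_affine_square_normal) auto
  have "AE t in lborel. truncated t \<le> majorant t"
    using AE_lborel_singleton[of z]
  proof eventually_elim
    case (elim t)
    have "m\<^sup>2 \<le> 1" using m by (simp add: power_le_one)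
    also have "1 \<le> (1 + max t 0 / c)\<^sup>2" using c by simp
    finally have "m\<^sup>2 \<le> (1 + max t 0 / c)\<^sup>2" .
    moreover have "z \<le> t \<Longrightarrow> (1 + t / c)\<^sup>2 \<le> (1 + max t 0 / c)\<^sup>2"
      using affine_square_le_positive_part_square[of c m t] c m z by simp
    ultimately show ?case
      using elim by (auto simp: truncated_def majorant_def indicator_def intro: mult_right_mono)
  qed
  then have "integral\<^sup>L lborel truncated \<le> integral\<^sup>L lborel majorant"
    using std_normal_positive_part_square[of c] left right
    by (intro integral_mono_AE) (auto simp: truncated_def majorant_def has_bochner_integral_iff)
  moreover have "integral\<^sup>L lborel truncated = m\<^sup>2 * Phi z + square_tail c z"
    using left right by (simp add: truncated_def Phi_def square_tail_def set_lebesgue_integral_def)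
  moreover have "integral\<^sup>L lborel majorant = 1 + sqrt (2 / pi) / c + 1 / (2 * c\<^sup>2)"
    using std_normal_positive_part_square[of c] by (simp add: majorant_def has_bochner_integral_iff)
  ultimately show ?thesis by simp
qed

(* The constant in the tail bound at c = sqrt(2 ln M) + a equals r1/ln M; this is the origin
   of the two summands r0/2 and sqrt(ln M)/(sqrt pi (1 + delta_a)) of r1. *)
lemma bound_constant_eq_r1:
  fixes M :: nat and a :: real
  assumes "M \<ge> 2" and "a \<ge> 0"
  defines "c \<equiv> sqrt (2 * ln (real M)) + a"
  shows "sqrt (2 / pi) / c + 1 / (2 * c\<^sup>2) = r1 M a / ln (real M)"
proof -
  define L where "L = ln (real M)"
  define \<delta> where "\<delta> = delta_a M a"
  have L: "L > 0" unfolding L_def using assms(1) by simp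
  have \<delta>: "\<delta> \<ge> 0" unfolding \<delta>_def delta_a_def using assms(2) L unfolding L_def by simp
  have c: "c = sqrt 2 * sqrt L * (1 + \<delta>)"
    using L unfolding c_def \<delta>_def delta_a_def L_def by (simp add: real_sqrt_mult field_simps)
  have "sqrt (2 / pi) / c = (sqrt 2 / sqrt 2) / (sqrt L * sqrt pi * (1 + \<delta>))"
    unfolding c by (simp add: real_sqrt_divide)
  also have "\<dots> = 1 / (sqrt L * sqrt pi * (1 + \<delta>))" by simp
  also have "\<dots> = (sqrt L / L) / (sqrt pi * (1 + \<delta>))"
    using L sqrt_divide_self_eq[of L] by (simp add: divide_inverse mult.assoc)
  also have "\<dots> = sqrt L / (sqrt pi * (1 + \<delta>)) / L" by simp
  finally have first_order: "sqrt (2 / pi) / c = sqrt L / (sqrt pi * (1 + \<delta>)) / L" .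
  have "c\<^sup>2 = 2 * L * (1 + \<delta>)\<^sup>2"
    using L unfolding c power_mult_distrib by simp
  then have second_order: "1 / (2 * c\<^sup>2) = r0 M a / 2 / L"
    using L \<delta> unfolding r0_def \<delta>_def[symmetric] by (simp add: field_simps)
  show ?thesis
    using first_order second_order
    unfolding r1_def L_def[symmetric] \<delta>_def[symmetric] by (simp add: add_divide_distrib)
qed

(* r1 > 0, so the hypothesis r > r1 makes r, and hence 1 + r/ln M, positive. *)
lemma r1_pos:
  fixes M :: nat and a :: real
  assumes "M \<ge> 2" and "a \<ge> 0"
  shows "r1 M a > 0"
proof -
  have "delta_a M a \<ge> 0" using assms by (simp add: delta_a_def)
  then show ?thesis using assms(1) unfolding r1_def r0_def by (simp add: add_pos_pos)
qed

(* The factor 1/snr of the gap comes from (1 - nu)/nu. *)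
lemma one_minus_nu_div_nu: "snr > 0 \<Longrightarrow> (1 - nu snr) / nu snr = 1 / snr"
  by (simp add: nu_def field_simps)

lemma u_x_lower_bound:
  fixes M :: nat and snr r x :: real
  assumes "snr > 0" and "x \<le> x_r M snr r"
  shows "(1 - nu snr) * (1 + r / ln (real M)) \<le> u_x snr x"
proof -
  have nu_pos: "0 < nu snr" using assms(1) by (simp add: nu_def)
  have nu_div: "nu snr / snr = 1 - nu snr"
    using assms(1) by (simp add: nu_def divide_simps add_pos_pos)
  from nu_pos have "x * nu snr \<le> (1 - (1 / snr) * (r / ln (real M))) * nu snr"
    using assms(2) unfolding x_r_def by (simp add: mult_right_mono)
  also have "\<dots> = nu snr - (nu snr / snr) * (r / ln (real M))"
    by (simp add: algebra_simps)
  also have "\<dots> = nu snr - (1 - nu snr) * (r / ln (real M))"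
    unfolding nu_div ..
  finally show ?thesis unfolding u_x_def by (simp add: algebra_simps)
qed

lemma z_x_rate_R:
  fixes M :: nat and snr a C' r x :: real
  assumes "M \<ge> 2" and "a \<ge> 0" and "C' > 0"
    and w: "1 + r / ln (real M) > 0" and u: "u_x snr x > 0"
  defines "c \<equiv> sqrt (2 * ln (real M)) + a"
    and "k \<equiv> u_x snr x / (1 + r / ln (real M))"
  shows "z_x M snr a C' (rate_R M a C' r) x = c * (sqrt ((1 - nu snr) / k) - 1)"
proof -
  define s where "s = sqrt (2 * ln (real M))"
  define \<delta> where "\<delta> = delta_a M a"
  have s: "s > 0" unfolding s_def using assms(1) by simp
  have \<delta>: "1 + \<delta> > 0"
    using s assms(2) unfolding \<delta>_def delta_a_def s_def[symmetric] by (simp add: add_pos_nonneg)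
  have ratio: "(1 - nu snr) * C' / rate_R M a C' r / u_x snr x = (1 + \<delta>)\<^sup>2 * ((1 - nu snr) / k)"
    using assms(3) w u \<delta> unfolding rate_R_def k_def \<delta>_def[symmetric] by (simp add: field_simps)
  have "sqrt ((1 - nu snr) * C' / rate_R M a C' r / u_x snr x) = (1 + \<delta>) * sqrt ((1 - nu snr) / k)"
    unfolding ratio real_sqrt_mult using \<delta> by simp
  moreover have "c = s * (1 + \<delta>)" and "a = s * \<delta>"
    using s unfolding c_def \<delta>_def delta_a_def s_def[symmetric] by (simp_all add: field_simps)
  ultimately show ?thesis
    unfolding z_x_def mu_def u_x_def[symmetric] s_def[symmetric] by (simp add: algebra_simps)
qed

(* At the same rate the integrand of g_low is 1 - k (1 + t/c)^2, since
   1 + (t + a)/sqrt(2 ln M) = (1 + delta_a)(1 + t/c). *)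
lemma g_low_integrand_rate_R:
  fixes M :: nat and snr a C' r x t :: real
  assumes "M \<ge> 2" and "a \<ge> 0" and "C' > 0"
  defines "c \<equiv> sqrt (2 * ln (real M)) + a"
    and "k \<equiv> u_x snr x / (1 + r / ln (real M))"
  shows "rate_R M a C' r / C' * u_x snr x * (1 + (t + a) / sqrt (2 * ln (real M)))\<^sup>2
           = k * (1 + t / c)\<^sup>2"
proof -
  define s where "s = sqrt (2 * ln (real M))"
  define \<delta> where "\<delta> = delta_a M a"
  have s: "s > 0" unfolding s_def using assms(1) by simp
  have \<delta>: "1 + \<delta> > 0"
    using s assms(2) unfolding \<delta>_def delta_a_def s_def[symmetric] by (simp add: add_pos_nonneg)
  have c: "c = s * (1 + \<delta>)"
    using s unfolding c_def \<delta>_def delta_a_def s_def[symmetric] by (simp add: field_simps)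
  have a: "a = s * \<delta>" using s unfolding \<delta>_def delta_a_def s_def[symmetric] by simp
  have "1 + (t + a) / s = (1 + \<delta>) * (1 + t / c)"
    using s \<delta> mult_pos_pos[OF s \<delta>] unfolding c a by (simp add: field_simps)
  moreover have "rate_R M a C' r / C' * u_x snr x = k / (1 + \<delta>)\<^sup>2"
    using assms(3) unfolding rate_R_def k_def \<delta>_def by (simp add: mult.commute)
  ultimately show ?thesis
    unfolding s_def[symmetric] using \<delta> by (simp add: power_mult_distrib)
qed

lemma g_low_rate_R:
  fixes M :: nat and snr a C' r x :: real
  assumes "M \<ge> 2" and "a \<ge> 0" and "C' > 0"
    and "1 + r / ln (real M) > 0" and "u_x snr x > 0"
  defines "c \<equiv> sqrt (2 * ln (real M)) + a"
    and "k \<equiv> u_x snr x / (1 + r / ln (real M))"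
  defines "z \<equiv> c * (sqrt ((1 - nu snr) / k) - 1)"
  shows "g_low M snr a C' (rate_R M a C' r) x
           = Phi z + (1 / nu snr) * (normal_tail z - k * square_tail c z)"
proof -
  have "z_x M snr a C' (rate_R M a C' r) x = z"
    unfolding z_def c_def k_def by (rule z_x_rate_R[OF assms(1-5)])
  moreover have "\<And>t. rate_R M a C' r / C' * u_x snr x * (1 + (t + a) / sqrt (2 * ln (real M)))\<^sup>2
                     = k * (1 + t / c)\<^sup>2"
    unfolding c_def k_def by (rule g_low_integrand_rate_R[OF assms(1-3)])
  ultimately show ?thesis unfolding g_low_def by (simp only: tail_integral_split)
qed

lemma gap_from_tail_bounds:
  fixes P A B k q \<nu> x w D :: real
  assumes "0 < \<nu>" "\<nu> < 1" and "k * q\<^sup>2 = 1 - \<nu>" and "k * w = 1 - x * \<nu>"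
    and "1 - \<nu> \<le> k" and "0 \<le> D"
    and "1 \<le> P + A" and "q\<^sup>2 * P + B \<le> w - D"
  shows "(1 - \<nu>) / \<nu> * D \<le> P + (1 / \<nu>) * (A - k * B) - x"
proof -
  have "(1 - \<nu>) * D \<le> k * D" using assms(5,6) by (rule mult_right_mono)
  also have "\<dots> \<le> k * (w - (q\<^sup>2 * P + B))" using assms by (intro mult_left_mono) auto
  also have "\<dots> = k * w - (k * q\<^sup>2) * P - k * B" by (simp add: algebra_simps)
  also have "\<dots> = 1 - x * \<nu> - (1 - \<nu>) * P - k * B" unfolding assms(3,4) ..
  also have "\<dots> \<le> \<nu> * (P + (1 / \<nu>) * (A - k * B) - x)"
    using assms(1,7) by (simp add: algebra_simps)
  finally show ?thesis using assms(1) by (simp add: pos_divide_le_eq mult.commute)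
qed

(* The main result: reparametrise g_low at the rate R, bound the Gaussian tail terms, and
   combine. *)
theorem lemma7:
  fixes M :: nat and snr a C' r x :: real
  assumes "M \<ge> 2" and "snr > 0" and "a \<ge> 0" and "C' > 0"
    and "r > r1 M a"
    and "0 \<le> x" and "x \<le> 1" and "x \<le> x_r M snr r"
  shows "g_low M snr a C' (rate_R M a C' r) x - x \<ge> (1 / snr) * ((r - r1 M a) / ln (real M))"
proof -
  define L where "L = ln (real M)"
  define c where "c = sqrt (2 * L) + a"
  define w where "w = 1 + r / L"
  define k where "k = u_x snr x / w"
  define q where "q = sqrt ((1 - nu snr) / k)"
  define z where "z = c * (q - 1)"
  have L: "L > 0" and c: "c > 0" using assms(1,3) by (simp_all add: L_def c_def add_pos_nonneg)
  have \<nu>: "0 < nu snr" "nu snr < 1" using assms(2) by (simp_all add: nu_def)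
  have "r > 0" using r1_pos[OF assms(1,3)] assms(5) by linarith
  then have "w > 0" using L by (simp add: w_def add_pos_pos)
  moreover have u_lower: "(1 - nu snr) * w \<le> u_x snr x"
    using u_x_lower_bound[OF assms(2,8)] by (simp add: w_def L_def)
  ultimately have "u_x snr x > 0" using \<nu> mult_pos_pos[of "1 - nu snr" w] by linarith
  have k: "1 - nu snr \<le> k"
    using u_lower \<open>w > 0\<close> by (simp add: k_def pos_le_divide_eq)
  then have q: "0 < q" "q \<le> 1" "k * q\<^sup>2 = 1 - nu snr" using \<nu> by (auto simp: q_def)
  have g_low_eq: "g_low M snr a C' (rate_R M a C' r) x
          = Phi z + (1 / nu snr) * (normal_tail z - k * square_tail c z)"
    using g_low_rate_R[OF assms(1,3,4)] \<open>w > 0\<close> \<open>u_x snr x > 0\<close>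
    by (simp add: z_def q_def k_def c_def w_def L_def)
  have tail_bound: "q\<^sup>2 * Phi z + square_tail c z \<le> w - (r - r1 M a) / L"
    using square_tail_bound[OF c q(1,2) z_def] bound_constant_eq_r1[OF assms(1,3)]
    by (simp add: w_def c_def L_def diff_divide_distrib)
  have "k * w = 1 - x * nu snr" using \<open>w > 0\<close> by (simp add: k_def u_x_def)
  moreover have "0 \<le> (r - r1 M a) / L" using assms(5) L by simp
  ultimately have "(1 - nu snr) / nu snr * ((r - r1 M a) / L)
      \<le> Phi z + (1 / nu snr) * (normal_tail z - k * square_tail c z) - x"
    by (rule gap_from_tail_bounds[OF \<nu> q(3) _ k _ Phi_plus_normal_tail_ge_one tail_bound])
  then show ?thesis
    unfolding g_low_eq one_minus_nu_div_nu[OF assms(2)] L_def .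
qed

end
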